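(* Let $n\geq 2$, $\mu>0$, $1<\lambda\leq n$, and $h(x,y)=(\mu x,\lambda y)$. Then there exists an orientation preserving homeomorphism $g:\mathbb{R}\to\mathbb{R}$ with $g\neq\mathrm{id}$ and $\sup_{y}|g(y)-y|<\infty$ such that $f(x,y)=(x,g(y))$ satisfies $hfh^{-1}=f^n$ (in particular $f$ is a nontrivial orientation preserving homeomorphism of $\mathbb{R}^2$ with bounded displacement). For $\lambda=n$ one may take $g(y)=y+1$. *)

theory Defs
  imports "HOL-Analysis.Analysis"
begin

definition hmap :: "real \<Rightarrow> real \<Rightarrow> real \<times> real \<Rightarrow> real \<times> real" where
  "hmap mu lam = (\<lambda>(x, y). (mu * x, lam * y))"

definition fmap :: "(real \<Rightarrow> real) \<Rightarrow> real \<times> real \<Rightarrow> real \<times> real" where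
  "fmap g = (\<lambda>(x, y). (x, g y))"

definition good_g :: "nat \<Rightarrow> real \<Rightarrow> real \<Rightarrow> (real \<Rightarrow> real) \<Rightarrow> bool" where
  "good_g n mu lam g \<longleftrightarrow>
     (\<exists>g'. homeomorphism UNIV UNIV g g') \<and> strict_mono g \<and> g \<noteq> id \<and>
     (\<exists>B. \<forall>y. \<bar>g y - y\<bar> \<le> B) \<and>
     hmap mu lam \<circ> fmap g \<circ> inv (hmap mu lam) = fmap g ^^ n"

end

theory Submission
  imports Defs
begin

text \<open>Let \<open>a = log\<^sub>\<lambda> n \<ge> 1\<close> and \<open>\<phi>(y) = sgn y \<bar>y\<bar>\<^sup>a\<close>. Since \<open>\<phi>(y/\<lambda>) = \<phi>(y)/n\<close>, the
  conjugate \<open>g = \<phi>\<^sup>-\<^sup>1 \<circ> (+1) \<circ> \<phi>\<close> of the unit translation satisfies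
  \<open>\<lambda> g(y/\<lambda>) = \<phi>\<^sup>-\<^sup>1(\<phi>(y) + n) = g\<^sup>n(y)\<close>, which is \<open>h f h\<^sup>-\<^sup>1 = f\<^sup>n\<close> for \<open>f = id \<times> g\<close>.
  The displacement of \<open>g\<close> is bounded because \<open>\<phi>\<^sup>-\<^sup>1\<close> is a signed power with exponent
  \<open>1/a \<le> 1\<close>, hence subadditive on each half-line.\<close>

definition signed_powr :: "real \<Rightarrow> real \<Rightarrow> real" where
  "signed_powr c y = max y 0 powr c - max (-y) 0 powr c"

lemma signed_powr_nonneg: "y \<ge> 0 \<Longrightarrow> signed_powr c y = y powr c"
  by (simp add: signed_powr_def)

lemma signed_powr_nonpos: "y \<le> 0 \<Longrightarrow> signed_powr c y = - ((-y) powr c)"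
  by (simp add: signed_powr_def)

lemma signed_powr_one [simp]: "signed_powr 1 y = y"
  by (cases "y \<ge> 0") (simp_all add: signed_powr_nonneg signed_powr_nonpos)

lemma signed_powr_signed_powr: "signed_powr c (signed_powr d y) = signed_powr (d * c) y"
proof (cases "y \<ge> 0")
  case True
  then show ?thesis by (simp add: signed_powr_nonneg powr_powr)
next
  case False
  then have "signed_powr d y \<le> 0" by (simp add: signed_powr_nonpos)
  with False show ?thesis by (simp add: signed_powr_nonpos powr_powr)
qed

lemma signed_powr_inverse [simp]:
  "c \<noteq> 0 \<Longrightarrow> signed_powr (1 / c) (signed_powr c y) = y"
  "c \<noteq> 0 \<Longrightarrow> signed_powr c (signed_powr (1 / c) y) = y"
  by (simp_all add: signed_powr_signed_powr)

lemma signed_powr_mult: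
  assumes "k > 0" shows "signed_powr c (k * y) = k powr c * signed_powr c y"
proof (cases "y \<ge> 0")
  case True
  with assms show ?thesis by (simp add: signed_powr_nonneg powr_mult)
next
  case False
  with assms have "k * y \<le> 0" by (simp add: mult_nonneg_nonpos)
  with assms False show ?thesis by (simp add: signed_powr_nonpos powr_mult[symmetric])
qed

lemma continuous_on_signed_powr: "c > 0 \<Longrightarrow> continuous_on UNIV (signed_powr c)"
  unfolding signed_powr_def[abs_def] by (intro continuous_intros continuous_on_powr') auto

lemma strict_mono_signed_powr:
  assumes "c > 0" shows "strict_mono (signed_powr c)"
proof (rule strict_monoI)
  fix x y :: real
  assume "x < y"
  then consider "0 \<le> x" | "x < 0" "0 \<le> y" | "y < 0"
    by linarith
  then show "signed_powr c x < signed_powr c y"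
  proof cases
    case 1
    with \<open>x < y\<close> assms show ?thesis by (simp add: signed_powr_nonneg powr_less_mono2)
  next
    case 2
    then have "signed_powr c x < 0" "0 \<le> signed_powr c y"
      by (simp_all add: signed_powr_nonneg signed_powr_nonpos)
    then show ?thesis by linarith
  next
    case 3
    with \<open>x < y\<close> assms show ?thesis by (simp add: signed_powr_nonpos powr_less_mono2)
  qed
qed

lemma powr_add_le_add_powr:
  fixes x y b :: real
  assumes "x \<ge> 0" "y \<ge> 0" "0 < b" "b \<le> 1"
  shows "(x + y) powr b \<le> x powr b + y powr b"
proof (cases "x + y = 0")
  case True
  with assms show ?thesis by simp
next
  case False
  with assms have s: "x + y > 0" by simp
  define u v where "u = x / (x + y)" and "v = y / (x + y)"
  have uv: "0 \<le> u" "u \<le> 1" "0 \<le> v" "v \<le> 1" "u + v = 1"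
    using s assms by (auto simp: u_def v_def add_divide_distrib[symmetric])
  \<comment> \<open>On \<open>[0, 1]\<close> a power with exponent at most \<open>1\<close> lies above the identity.\<close>
  have "1 \<le> u powr b + v powr b"
    using uv powr_mono'[of b 1 u] powr_mono'[of b 1 v] assms by simp
  then have "(x + y) powr b \<le> (x + y) powr b * (u powr b + v powr b)"
    using s by simp
  also have "\<dots> = x powr b + y powr b"
    using s assms by (simp add: u_def v_def powr_divide distrib_left)
  finally show ?thesis .
qed

lemma signed_powr_add_one_le:
  assumes "0 < b" "b \<le> 1" shows "\<bar>signed_powr b (s + 1) - signed_powr b s\<bar> \<le> 2"
proof -
  have "signed_powr b s \<le> signed_powr b (s + 1)"
    using strict_mono_signed_powr[OF assms(1)] by (simp add: strict_mono_less_eq)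
  moreover consider "0 \<le> s" | "s \<le> -1" | "-1 < s" "s < 0"
    by linarith
  then have "signed_powr b (s + 1) - signed_powr b s \<le> 2"
  proof cases
    case 1
    then show ?thesis using powr_add_le_add_powr[of s 1 b] assms by (simp add: signed_powr_nonneg)
  next
    case 2
    then show ?thesis
      using powr_add_le_add_powr[of "-s-1" 1 b] assms by (simp add: signed_powr_nonpos)
  next
    case 3
    then have "(s + 1) powr b \<le> 1" "(-s) powr b \<le> 1"
      using assms by (auto intro: powr_le1)
    with 3 show ?thesis by (simp add: signed_powr_nonneg signed_powr_nonpos)
  qed
  ultimately show ?thesis by simp
qed

definition powr_shift :: "real \<Rightarrow> real \<Rightarrow> real" where
  "powr_shift a y = signed_powr (1 / a) (signed_powr a y + 1)"

lemma powr_shift_one: "powr_shift 1 = (\<lambda>y. y + 1)"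
  by (simp add: powr_shift_def fun_eq_iff)

lemma funpow_powr_shift:
  assumes "a \<noteq> 0"
  shows "(powr_shift a ^^ k) y = signed_powr (1 / a) (signed_powr a y + real k)"
  by (induction k arbitrary: y) (simp_all add: powr_shift_def assms ac_simps)

lemma homeomorphism_powr_shift:
  assumes "a > 0"
  shows "homeomorphism UNIV UNIV (powr_shift a) (\<lambda>y. signed_powr (1 / a) (signed_powr a y - 1))"
proof (rule homeomorphismI)
  have cont: "continuous_on UNIV (signed_powr a)" "continuous_on UNIV (signed_powr (1 / a))"
    using assms by (simp_all add: continuous_on_signed_powr)
  show "continuous_on UNIV (powr_shift a)"
    unfolding powr_shift_def
    by (intro continuous_on_compose2[OF cont(2)] continuous_intros cont(1)) auto
  show "continuous_on UNIV (\<lambda>y. signed_powr (1 / a) (signed_powr a y - 1))"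
    by (intro continuous_on_compose2[OF cont(2)] continuous_intros cont(1)) auto
qed (use assms in \<open>auto simp: powr_shift_def\<close>)

lemma strict_mono_powr_shift: "a > 0 \<Longrightarrow> strict_mono (powr_shift a)"
  using strict_mono_signed_powr[of a] strict_mono_signed_powr[of "1 / a"]
  by (simp add: strict_mono_def powr_shift_def)

lemma powr_shift_displacement_le:
  assumes "a \<ge> 1" shows "\<bar>powr_shift a y - y\<bar> \<le> 2"
proof -
  have "\<bar>signed_powr (1 / a) (signed_powr a y + 1) - signed_powr (1 / a) (signed_powr a y)\<bar> \<le> 2"
    using assms by (intro signed_powr_add_one_le) auto
  with assms show ?thesis
    by (simp add: powr_shift_def)
qed

lemma powr_shift_rescale:
  assumes "lam > 0" "a \<noteq> 0" "lam powr a = real n"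
  shows "lam * powr_shift a (y / lam) = (powr_shift a ^^ n) y"
proof -
  have "n > 0"
    using assms by (auto intro!: Nat.gr0I)
  have contract: "signed_powr a (y / lam) = signed_powr a y / real n"
    using signed_powr_mult[of "1 / lam" a y] assms by (simp add: powr_divide)
  have "real n powr (1 / a) = lam"
    using assms by (simp add: powr_powr flip: assms(3))
  then have expand: "lam * signed_powr (1 / a) z = signed_powr (1 / a) (real n * z)" for z
    using signed_powr_mult[of "real n" "1 / a" z] \<open>n > 0\<close> by simp
  show ?thesis
    using \<open>n > 0\<close> assms
    by (simp add: powr_shift_def funpow_powr_shift contract expand distrib_left)
qed

lemma funpow_fmap: "fmap g ^^ n = fmap (g ^^ n)"
  by (induction n) (auto simp: fmap_def fun_eq_iff)

lemma inv_hmap: "mu \<noteq> 0 \<Longrightarrow> lam \<noteq> 0 \<Longrightarrow> inv (hmap mu lam) = hmap (1 / mu) (1 / lam)"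
  by (rule inv_equality) (auto simp: hmap_def split: prod.splits)

lemma hmap_fmap_conjugate_eq:
  assumes "mu \<noteq> 0" "lam \<noteq> 0" "\<And>y. lam * g (y / lam) = (g ^^ n) y"
  shows "hmap mu lam \<circ> fmap g \<circ> inv (hmap mu lam) = fmap g ^^ n"
  unfolding funpow_fmap inv_hmap[OF assms(1,2)]
  using assms by (auto simp: fun_eq_iff hmap_def fmap_def)

lemma good_g_powr_shift:
  assumes "mu \<noteq> 0" "1 < lam" "lam \<le> real n"
  shows "good_g n mu lam (powr_shift (log lam n))"
proof -
  let ?a = "log lam n"
  have "?a \<ge> 1"
    using assms log_le_cancel_iff[of lam lam n] by simp
  have "powr_shift ?a 0 = 1"
    by (simp add: powr_shift_def signed_powr_nonneg)
  then have "powr_shift ?a \<noteq> id"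
    by (metis id_apply zero_neq_one)
  moreover have "lam * powr_shift ?a (y / lam) = (powr_shift ?a ^^ n) y" for y
  proof (rule powr_shift_rescale)
    show "lam > 0" "lam powr ?a = real n"
      using assms by simp_all
    show "?a \<noteq> 0"
      using \<open>?a \<ge> 1\<close> by linarith
  qed
  then have "hmap mu lam \<circ> fmap (powr_shift ?a) \<circ> inv (hmap mu lam) = fmap (powr_shift ?a) ^^ n"
    using assms by (intro hmap_fmap_conjugate_eq) auto
  moreover have "homeomorphism UNIV UNIV (powr_shift ?a)
      (\<lambda>y. signed_powr (1 / ?a) (signed_powr ?a y - 1))" "strict_mono (powr_shift ?a)"
    using \<open>?a \<ge> 1\<close> by (simp_all add: homeomorphism_powr_shift strict_mono_powr_shift)
  moreover have "\<bar>powr_shift ?a y - y\<bar> \<le> 2" for y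
    using \<open>?a \<ge> 1\<close> by (rule powr_shift_displacement_le)
  ultimately show ?thesis
    unfolding good_g_def by blast
qed

theorem mainTheorem14:
  fixes n :: nat and mu lam :: real
  assumes "n \<ge> 2" and "mu > 0" and "1 < lam" and "lam \<le> real n"
  shows "(\<exists>g. good_g n mu lam g) \<and> (lam = real n \<longrightarrow> good_g n mu lam (\<lambda>y. y + 1))"
proof -
  have "good_g n mu lam (powr_shift (log lam n))"
    using assms by (intro good_g_powr_shift) auto
  moreover have "log lam n = 1" if "lam = real n"
    using that assms by simp
  ultimately show ?thesis
    by (auto simp: powr_shift_one)
qed

end
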